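(* Let $\Omega\subseteq\mathbb{R}^d$ be compact, $m\ge0$, and let $h_0,C_1,C_2>0$ be constants of local polynomial reproduction as described in the context. Fix $\nu>0$, $\gamma\in(0,1)$, $c_\gamma>1$, $c_{qu}>0$. Let $X=\{x_1,\dots,x_N\}\subseteq\Omega$ be $\pi_m(\mathbb{R}^d)$-unisolvent and quasi-uniform with respect to $c_{qu}$, with $h_{X,\Omega}\le h_0$, and let $\gamma c_\gamma h_{X,\Omega}\le\delta\le c_\gamma h_{X,\Omega}$. For $x\in\Omega$ let $(a_1^*(x),\dots,a_N^*(x))$ be any minimizer of the linear program $$\min\ \sum_{i=1}^N\frac{|a_i|}{e^{-\nu(\|x-x_i\|_2/\delta)^2}}\quad\text{subject to}\quad\sum_{i=1}^N p(x_i)a_i=p(x)\ \text{ for all }p\in\pi_m(\mathbb{R}^d).$$ Then $\sum_i p(x_i)a_i^*(x)=p(x)$ for all $p\in\pi_m(\mathbb{R}^d)$, and for all $x\in\Omega$, $i=1,\dots,N$, $$|a_i^*(x)|\le C\,\varphi\!\left(\frac{\|x-x_i\|_2}{q_X}\right),\qquad C=e\,C_1\exp\!\Big(\nu\Big(\frac{C_2}{\gamma c_\gamma}\Big)^2\Big),\quad \varphi(t)=\exp\!\Big(-\sqrt{\nu}\,\frac{t}{c_\gamma c_{qu}}\Big).$$ Hence these functions provide fast-decaying polynomial reproduction of degree $m$ with respect to $\varphi$.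
   Context: Constants $h_0,C_1,C_2>0$: for every finite $X=\{x_1,\dots,x_N\}\subseteq\Omega$ with $h_{X,\Omega}\le h_0$ and every $x\in\Omega$ there are reals $\tilde u_j(x)$ with $\sum_j p(x_j)\tilde u_j(x)=p(x)$ for all $p\in\pi_m(\mathbb{R}^d)$, $\sum_j|\tilde u_j(x)|\le C_1$, $\tilde u_j(x)=0$ if $\|x-x_j\|_2>C_2h_{X,\Omega}$. $q_X=\frac12\min_{i\ne j}\|x_i-x_j\|_2$, $h_{X,\Omega}=\sup_{x\in\Omega}\min_j\|x-x_j\|_2$; quasi-uniform w.r.t. $c_{qu}$ means $q_X\le h_{X,\Omega}\le c_{qu}q_X$. $\pi_m(\mathbb{R}^d)$: polynomials of total degree $\le m$; unisolvent: only the zero polynomial of $\pi_m$ vanishes on $X$. Fast-decaying polynomial reproduction of degree $m$ w.r.t. a decreasing $\varphi>0$ with $\lim\varphi(n+1)/\varphi(n)<1$: $\sum_j p(x_j)a_j^*=p$ for all $p\in\pi_m(\mathbb{R}^d)$ and $|a_j^*(x)|\le C\varphi(\|x-x_j\|_2/q_X)$ for all $x,j$. *)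

theory Defs
  imports "HOL-Analysis.Analysis"
begin

definition monomial :: "('d::finite \<Rightarrow> nat) \<Rightarrow> real^'d \<Rightarrow> real" where
  "monomial \<alpha> x = (\<Prod>i\<in>UNIV. (x $ i) ^ (\<alpha> i))"

definition poly_space :: "nat \<Rightarrow> (real^'d::finite \<Rightarrow> real) set" where
  "poly_space m = {p. \<exists>c :: ('d \<Rightarrow> nat) \<Rightarrow> real.
      p = (\<lambda>x. \<Sum>\<alpha>\<in>{\<alpha>. sum \<alpha> UNIV \<le> m}. c \<alpha> * monomial \<alpha> x)}"

definition unisolvent :: "nat \<Rightarrow> (real^'d::finite) set \<Rightarrow> bool" where
  "unisolvent m X \<longleftrightarrow> (\<forall>p\<in>poly_space m. (\<forall>y\<in>X. p y = 0) \<longrightarrow> p = (\<lambda>_. 0))"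

definition fill_dist :: "(real^'d::finite) set \<Rightarrow> (real^'d) set \<Rightarrow> real" where
  "fill_dist X \<Omega> = (SUP x\<in>\<Omega>. infdist x X)"

definition sep_dist :: "(real^'d::finite) set \<Rightarrow> real" where
  "sep_dist X = Inf {dist a b / 2 | a b. a \<in> X \<and> b \<in> X \<and> a \<noteq> b}"

definition quasi_uniform :: "real \<Rightarrow> (real^'d::finite) set \<Rightarrow> (real^'d) set \<Rightarrow> bool" where
  "quasi_uniform cqu X \<Omega> \<longleftrightarrow> sep_dist X \<le> fill_dist X \<Omega> \<and> fill_dist X \<Omega> \<le> cqu * sep_dist X"

definition local_poly_repr ::
  "(real^'d::finite) set \<Rightarrow> nat \<Rightarrow> real \<Rightarrow> real \<Rightarrow> real \<Rightarrow> bool" where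
  "local_poly_repr \<Omega> m h0 C1 C2 \<longleftrightarrow>
    (\<forall>(N::nat) (y::nat \<Rightarrow> real^'d). N \<ge> 1 \<and> inj_on y {..<N} \<and> y ` {..<N} \<subseteq> \<Omega>
       \<and> fill_dist (y ` {..<N}) \<Omega> \<le> h0 \<longrightarrow>
      (\<forall>x\<in>\<Omega>. \<exists>u::nat \<Rightarrow> real.
         (\<forall>p\<in>poly_space m. (\<Sum>j<N. p (y j) * u j) = p x)
       \<and> (\<Sum>j<N. \<bar>u j\<bar>) \<le> C1
       \<and> (\<forall>j<N. norm (x - y j) > C2 * fill_dist (y ` {..<N}) \<Omega> \<longrightarrow> u j = 0)))"

definition lp_feasible :: "nat \<Rightarrow> nat \<Rightarrow> (nat \<Rightarrow> real^'d::finite) \<Rightarrow> real^'d \<Rightarrow> (nat \<Rightarrow> real) \<Rightarrow> bool" where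
  "lp_feasible m N xs x a \<longleftrightarrow> (\<forall>p\<in>poly_space m. (\<Sum>i<N. p (xs i) * a i) = p x)"

definition lp_objective :: "real \<Rightarrow> real \<Rightarrow> nat \<Rightarrow> (nat \<Rightarrow> real^'d::finite) \<Rightarrow> real^'d \<Rightarrow> (nat \<Rightarrow> real) \<Rightarrow> real" where
  "lp_objective \<nu> \<delta> N xs x a = (\<Sum>i<N. \<bar>a i\<bar> / exp (- \<nu> * (norm (x - xs i) / \<delta>)^2))"

definition lp_minimizer :: "nat \<Rightarrow> real \<Rightarrow> real \<Rightarrow> nat \<Rightarrow> (nat \<Rightarrow> real^'d::finite) \<Rightarrow> real^'d \<Rightarrow> (nat \<Rightarrow> real) \<Rightarrow> bool" where
  "lp_minimizer m \<nu> \<delta> N xs x a \<longleftrightarrow> lp_feasible m N xs x a \<and>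
     (\<forall>b. lp_feasible m N xs x b \<longrightarrow> lp_objective \<nu> \<delta> N xs x a \<le> lp_objective \<nu> \<delta> N xs x b)"

definition fast_decaying_repr ::
  "nat \<Rightarrow> (real^'d::finite) set \<Rightarrow> nat \<Rightarrow> (nat \<Rightarrow> real^'d) \<Rightarrow> (real \<Rightarrow> real) \<Rightarrow> (real^'d \<Rightarrow> nat \<Rightarrow> real) \<Rightarrow> bool" where
  "fast_decaying_repr m \<Omega> N xs \<phi> a \<longleftrightarrow>
     (\<forall>t\<ge>0. \<phi> t > 0) \<and> (\<forall>s t. 0 \<le> s \<longrightarrow> s \<le> t \<longrightarrow> \<phi> t \<le> \<phi> s)
   \<and> (\<exists>L<1. (\<lambda>n::nat. \<phi> (real n + 1) / \<phi> (real n)) \<longlonglongrightarrow> L)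
   \<and> (\<forall>x\<in>\<Omega>. \<forall>p\<in>poly_space m. (\<Sum>j<N. p (xs j) * a x j) = p x)
   \<and> (\<exists>C. \<forall>x\<in>\<Omega>. \<forall>j<N. \<bar>a x j\<bar> \<le> C * \<phi> (norm (x - xs j) / sep_dist (xs ` {..<N})))"

end

theory Submission
  imports Defs
begin

text \<open>A minimizer of the weighted \<open>\<ell>\<^sub>1\<close> program is compared with the weights \<open>u\<close> of a
  local polynomial reproduction: since \<open>u\<close> is supported in a ball of radius \<open>C\<^sub>2 h \<le> C\<^sub>2 \<delta> / (\<gamma> c\<^sub>\<gamma>)\<close>,
  the objective of \<open>u\<close> is at most \<open>C\<^sub>1 exp (\<nu> (C\<^sub>2/(\<gamma> c\<^sub>\<gamma>))\<^sup>2)\<close>, and a single term of the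
  minimizer's objective bounds \<open>|a\<^sub>i| exp (\<nu> (\<parallel>x - x\<^sub>i\<parallel>/\<delta>)\<^sup>2)\<close>. The Gaussian decay obtained
  this way dominates the exponential one, because \<open>\<nu> t\<^sup>2 \<ge> \<surd>\<nu> t - 1\<close> and
  \<open>\<delta> \<le> c\<^sub>\<gamma> h \<le> c\<^sub>\<gamma> c\<^sub>q\<^sub>u q\<^sub>X\<close>.\<close>

lemma sep_dist_nonneg:
  assumes "a \<in> X" "b \<in> X" "a \<noteq> b"
  shows "0 \<le> sep_dist X"
  unfolding sep_dist_def
proof (rule cInf_greatest)
  show "{dist a b / 2 | a b. a \<in> X \<and> b \<in> X \<and> a \<noteq> b} \<noteq> {}"
    using assms by blast
qed (auto, smt (verit) zero_le_dist)

lemma lp_objective_eq: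
  "lp_objective \<nu> \<delta> N xs x a = (\<Sum>i<N. \<bar>a i\<bar> * exp (\<nu> * (norm (x - xs i) / \<delta>)^2))"
  unfolding lp_objective_def by (simp add: exp_minus divide_inverse)

lemma lp_minimizer_abs_le:
  assumes min: "lp_minimizer m \<nu> \<delta> N xs x a" and feas: "lp_feasible m N xs x u"
    and "0 \<le> \<nu>" "0 \<le> \<delta>"
    and supp: "\<forall>j<N. u j \<noteq> 0 \<longrightarrow> norm (x - xs j) / \<delta> \<le> r"
    and "i < N"
  shows "\<bar>a i\<bar> \<le> (\<Sum>j<N. \<bar>u j\<bar>) * exp (\<nu> * r^2) * exp (- (\<nu> * (norm (x - xs i) / \<delta>)^2))"
proof -
  have weight_le: "\<bar>u j\<bar> * exp (\<nu> * (norm (x - xs j) / \<delta>)^2) \<le> \<bar>u j\<bar> * exp (\<nu> * r^2)"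
    if "j < N" for j
  proof (cases "u j = 0")
    case False
    with supp that have "(norm (x - xs j) / \<delta>)^2 \<le> r^2"
      using \<open>0 \<le> \<delta>\<close> by (intro power_mono) auto
    with \<open>0 \<le> \<nu>\<close> show ?thesis by (simp add: mult_left_mono)
  qed simp
  have "\<bar>a i\<bar> * exp (\<nu> * (norm (x - xs i) / \<delta>)^2) \<le> lp_objective \<nu> \<delta> N xs x a"
    unfolding lp_objective_eq using \<open>i < N\<close> by (intro member_le_sum) auto
  also have "\<dots> \<le> lp_objective \<nu> \<delta> N xs x u"
    using min feas unfolding lp_minimizer_def by blast
  also have "\<dots> \<le> (\<Sum>j<N. \<bar>u j\<bar>) * exp (\<nu> * r^2)"
    unfolding lp_objective_eq sum_distrib_right by (intro sum_mono weight_le) auto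
  finally show ?thesis by (simp add: exp_minus field_simps)
qed

lemma exp_neg_square_le:
  fixes \<nu> s t :: real
  assumes "0 \<le> \<nu>" "0 \<le> s" "s \<le> t"
  shows "exp (- (\<nu> * t^2)) \<le> exp 1 * exp (- sqrt \<nu> * s)"
proof -
  have "\<nu> * s^2 \<le> \<nu> * t^2"
    using assms by (intro mult_left_mono power_mono) auto
  moreover have "0 \<le> (sqrt \<nu> * s - 1/2)^2" by simp
  then have "sqrt \<nu> * s - 1 \<le> \<nu> * s^2"
    using assms by (simp add: power2_eq_square algebra_simps)
  ultimately show ?thesis
    by (simp flip: exp_add)
qed

lemma lp_minimizer_exp_decay:
  assumes min: "lp_minimizer m \<nu> \<delta> N xs x a" and feas: "lp_feasible m N xs x u"
    and sum_u: "(\<Sum>j<N. \<bar>u j\<bar>) \<le> C1"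
    and supp: "\<forall>j<N. C2 * h < norm (x - xs j) \<longrightarrow> u j = 0"
    and "0 \<le> \<nu>" "0 \<le> C2" "0 < \<kappa>" "0 < c" "0 \<le> q" "q \<le> h"
    and lower: "\<kappa> * h \<le> \<delta>" and upper: "\<delta> \<le> c * q"
    and "i < N"
  shows "\<bar>a i\<bar> \<le> exp 1 * C1 * exp (\<nu> * (C2 / \<kappa>)^2) * exp (- sqrt \<nu> * (norm (x - xs i) / q) / c)"
proof -
  have "0 \<le> \<delta>"
    using lower \<open>0 < \<kappa>\<close> \<open>0 \<le> q\<close> \<open>q \<le> h\<close> by (smt (verit) mult_nonneg_nonneg)
  have radius: "norm (x - xs j) / \<delta> \<le> C2 / \<kappa>" if "j < N" "u j \<noteq> 0" for j
  proof (cases "0 < \<delta> \<and> 0 < h")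
    case True
    have "norm (x - xs j) \<le> C2 * h" using supp that by force
    then have "norm (x - xs j) / \<delta> \<le> C2 * h / \<delta>"
      using True by (simp add: divide_right_mono)
    also have "\<dots> \<le> C2 * h / (\<kappa> * h)"
      using True lower \<open>0 \<le> C2\<close> \<open>0 < \<kappa>\<close> by (intro divide_left_mono) auto
    finally show ?thesis using True by simp
  next
    case False
    have "norm (x - xs j) \<le> C2 * h" using supp that by force
    moreover have "\<delta> = 0 \<or> h = 0"
      using False \<open>0 \<le> \<delta>\<close> \<open>0 \<le> q\<close> \<open>q \<le> h\<close> by linarith
    ultimately have "norm (x - xs j) / \<delta> = 0" by auto
    then show ?thesis using \<open>0 \<le> C2\<close> \<open>0 < \<kappa>\<close> by auto
  qed
  define s where "s = norm (x - xs i) / q / c"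
  have "0 \<le> s" unfolding s_def using \<open>0 \<le> q\<close> \<open>0 < c\<close> by simp
  have "s \<le> norm (x - xs i) / \<delta>"
  proof (cases "q = 0")
    case False
    then have "0 < \<delta>"
      using lower \<open>0 < \<kappa>\<close> \<open>0 \<le> q\<close> \<open>q \<le> h\<close> by (smt (verit) mult_pos_pos)
    then show ?thesis
      unfolding s_def using upper by (simp add: divide_left_mono mult.commute)
  qed (simp add: s_def \<open>0 \<le> \<delta>\<close>)
  have "0 \<le> C1" using sum_u sum_nonneg[of "{..<N}" "\<lambda>j. \<bar>u j\<bar>"] by linarith
  have "\<bar>a i\<bar> \<le> (\<Sum>j<N. \<bar>u j\<bar>) * exp (\<nu> * (C2 / \<kappa>)^2) * exp (- (\<nu> * (norm (x - xs i) / \<delta>)^2))"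
    using lp_minimizer_abs_le[OF min feas \<open>0 \<le> \<nu>\<close> \<open>0 \<le> \<delta>\<close> _ \<open>i < N\<close>] radius by blast
  also have "\<dots> \<le> C1 * exp (\<nu> * (C2 / \<kappa>)^2) * (exp 1 * exp (- sqrt \<nu> * s))"
    using sum_u \<open>0 \<le> C1\<close> exp_neg_square_le[OF \<open>0 \<le> \<nu>\<close> \<open>0 \<le> s\<close> \<open>s \<le> _\<close>]
    by (intro mult_mono) auto
  finally show ?thesis by (simp add: s_def mult_ac)
qed

lemma exp_fast_decaying_repr:
  assumes "0 < b" "0 < c"
    and "\<forall>x\<in>\<Omega>. \<forall>p\<in>poly_space m. (\<Sum>j<N. p (xs j) * a x j) = p x"
    and "\<forall>x\<in>\<Omega>. \<forall>j<N. \<bar>a x j\<bar> \<le> C * exp (- b * (norm (x - xs j) / sep_dist (xs ` {..<N})) / c)"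
  shows "fast_decaying_repr m \<Omega> N xs (\<lambda>t. exp (- b * t / c)) a"
proof -
  have ratio: "exp (- b * (real n + 1) / c) / exp (- b * real n / c) = exp (- b / c)" for n :: nat
    using \<open>0 < c\<close> by (simp flip: exp_diff add: field_simps)
  have "\<exists>L<1. (\<lambda>n::nat. exp (- b / c)) \<longlonglongrightarrow> L"
    using assms(1,2) by (intro exI[of _ "exp (- b / c)"]) simp
  moreover have "\<forall>s t. 0 \<le> s \<longrightarrow> s \<le> t \<longrightarrow> exp (- b * t / c) \<le> exp (- b * s / c)"
    using assms(1,2) by (auto intro!: divide_right_mono mult_left_mono)
  ultimately show ?thesis
    unfolding fast_decaying_repr_def ratio using assms(3,4) by auto
qed

lemma local_poly_reprE:
  assumes "local_poly_repr \<Omega> m h0 C1 C2" "1 \<le> N" "inj_on xs {..<N}" "xs ` {..<N} \<subseteq> \<Omega>"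
    "fill_dist (xs ` {..<N}) \<Omega> \<le> h0" "x \<in> \<Omega>"
  obtains u where "lp_feasible m N xs x u" "(\<Sum>j<N. \<bar>u j\<bar>) \<le> C1"
    "\<forall>j<N. C2 * fill_dist (xs ` {..<N}) \<Omega> < norm (x - xs j) \<longrightarrow> u j = 0"
  using assms unfolding local_poly_repr_def lp_feasible_def by blast

theorem theorem5p1:
  fixes \<Omega> :: "(real^'d::finite) set" and m N :: nat and xs :: "nat \<Rightarrow> real^'d"
    and h0 C1 C2 \<nu> \<gamma> c\<gamma> cqu \<delta> :: real
    and astar :: "real^'d \<Rightarrow> nat \<Rightarrow> real"
  assumes "compact \<Omega>"
    and "h0 > 0" and "C1 > 0" and "C2 > 0"
    and "local_poly_repr \<Omega> m h0 C1 C2"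
    and "\<nu> > 0" and "0 < \<gamma>" and "\<gamma> < 1" and "c\<gamma> > 1" and "cqu > 0"
    and "N \<ge> 2" and "inj_on xs {..<N}" and "xs ` {..<N} \<subseteq> \<Omega>"
    and "unisolvent m (xs ` {..<N})"
    and "quasi_uniform cqu (xs ` {..<N}) \<Omega>"
    and "fill_dist (xs ` {..<N}) \<Omega> \<le> h0"
    and "\<gamma> * c\<gamma> * fill_dist (xs ` {..<N}) \<Omega> \<le> \<delta>"
    and "\<delta> \<le> c\<gamma> * fill_dist (xs ` {..<N}) \<Omega>"
    and "\<forall>x\<in>\<Omega>. lp_minimizer m \<nu> \<delta> N xs x (astar x)"
  shows "(\<forall>x\<in>\<Omega>. \<forall>p\<in>poly_space m. (\<Sum>i<N. p (xs i) * astar x i) = p x)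
    \<and> (\<forall>x\<in>\<Omega>. \<forall>i<N. \<bar>astar x i\<bar> \<le>
          (exp 1 * C1 * exp (\<nu> * (C2 / (\<gamma> * c\<gamma>))^2))
          * exp (- sqrt \<nu> * ((norm (x - xs i) / sep_dist (xs ` {..<N}))) / (c\<gamma> * cqu)))
    \<and> fast_decaying_repr m \<Omega> N xs (\<lambda>t. exp (- sqrt \<nu> * t / (c\<gamma> * cqu))) astar"
proof -
  let ?h = "fill_dist (xs ` {..<N}) \<Omega>" and ?q = "sep_dist (xs ` {..<N})"
  have "xs 0 \<noteq> xs 1" using inj_onD[OF assms(12), of 0 1] assms(11) by auto
  then have "0 \<le> ?q" using assms(11) by (intro sep_dist_nonneg) auto
  have "?q \<le> ?h" "?h \<le> cqu * ?q" using assms(15) unfolding quasi_uniform_def by auto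
  then have "\<delta> \<le> (c\<gamma> * cqu) * ?q" using assms(9,18) by (smt (verit) mult.assoc mult_left_mono)
  have repr: "\<forall>x\<in>\<Omega>. \<forall>p\<in>poly_space m. (\<Sum>i<N. p (xs i) * astar x i) = p x"
    using assms(19) unfolding lp_minimizer_def lp_feasible_def by blast
  have bound: "\<forall>x\<in>\<Omega>. \<forall>i<N. \<bar>astar x i\<bar> \<le> (exp 1 * C1 * exp (\<nu> * (C2 / (\<gamma> * c\<gamma>))^2))
                 * exp (- sqrt \<nu> * (norm (x - xs i) / ?q) / (c\<gamma> * cqu))"
  proof (intro ballI allI impI)
    fix x i assume "x \<in> \<Omega>" "i < N"
    obtain u where "lp_feasible m N xs x u" "(\<Sum>j<N. \<bar>u j\<bar>) \<le> C1"
      "\<forall>j<N. C2 * ?h < norm (x - xs j) \<longrightarrow> u j = 0"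
      using local_poly_reprE[OF assms(5) _ assms(12,13,16) \<open>x \<in> \<Omega>\<close>] assms(11) by auto
    then show "\<bar>astar x i\<bar> \<le> (exp 1 * C1 * exp (\<nu> * (C2 / (\<gamma> * c\<gamma>))^2))
                 * exp (- sqrt \<nu> * (norm (x - xs i) / ?q) / (c\<gamma> * cqu))"
      using \<open>x \<in> \<Omega>\<close> assms(4,6,7,9,10,17,19) \<open>i < N\<close> \<open>0 \<le> ?q\<close> \<open>?q \<le> ?h\<close> \<open>\<delta> \<le> _ * ?q\<close>
      by (intro lp_minimizer_exp_decay[where h = ?h]) auto
  qed
  have "fast_decaying_repr m \<Omega> N xs (\<lambda>t. exp (- sqrt \<nu> * t / (c\<gamma> * cqu))) astar"
    using assms(6,9,10) repr bound by (intro exp_fast_decaying_repr) auto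
  with repr bound show ?thesis by blast
qed

end
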